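(* Let $R$ and $S$ be commutative rings with identity, $f:R\to S$ a ring homomorphism, and $J$ a nonzero proper ideal of $S$. Let $\mathfrak{p}$ and $\{\mathfrak{p}_\alpha\}_{\alpha\in\Lambda}$ be prime ideals of $R$, and $\mathfrak{q}$ and $\{\mathfrak{q}_\alpha\}_{\alpha\in\Lambda}$ be prime ideals of $S$ not containing $J$. Then: (1) $\mathfrak{p}^{\prime_f}\subseteq\bigcup_{\alpha\in\Lambda}\mathfrak{p}_\alpha^{\prime_f}$ if and only if $\mathfrak{p}\subseteq\bigcup_{\alpha\in\Lambda}\mathfrak{p}_\alpha$. (2) If $\mathfrak{q}\subseteq\bigcup_{\alpha\in\Lambda}\mathfrak{q}_\alpha$, then $\overline{\mathfrak{q}}^f\subseteq\bigcup_{\alpha\in\Lambda}\overline{\mathfrak{q}_\alpha}^f$. The converse holds if either $f$ is surjective or $\operatorname{Spec}(S)\setminus V(J)$ is compactly packed. (3) $\bigcup_{\alpha\in\Lambda}\mathfrak{p}_\alpha^{\prime_f}\subseteq\mathfrak{p}^{\prime_f}$ if and only if $\bigcup_{\alpha\in\Lambda}\mathfrak{p}_\alpha\subseteq\mathfrak{p}$; and $\bigcup_{\alpha\in\Lambda}\overline{\mathfrak{q}_\alpha}^f\subseteq\overline{\mathfrak{q}}^f$ if and only if $\bigcup_{\alpha\in\Lambda}\mathfrak{q}_\alpha\subseteq\mathfrak{q}$ (with no additional assumptions). (4) $\overline{\mathfrak{q}}^f\subseteq\bigcup_{\alpha\in\Lambda}\mathfrak{p}_\alpha^{\prime_f}$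 if and only if $f^{-1}(\mathfrak{q}+J)\subseteq\bigcup_{\alpha\in\Lambda}\mathfrak{p}_\alpha$. (5) If $\operatorname{Spec}(S)\setminus V(J)$ is compactly packed, then $\mathfrak{p}^{\prime_f}\not\subseteq\bigcup_{\alpha\in\Lambda}\overline{\mathfrak{q}_\alpha}^f$.
   Context: $R\bowtie^f J:=\{(r,f(r)+j)\mid r\in R,\ j\in J\}$, a subring of $R\times S$. For a prime ideal $\mathfrak{p}$ of $R$, $\mathfrak{p}^{\prime_f}:=\{(p,f(p)+j)\mid p\in\mathfrak{p},\ j\in J\}$; for a prime ideal $\mathfrak{q}$ of $S$ with $J\not\subseteq\mathfrak{q}$, $\overline{\mathfrak{q}}^f:=\{(r,f(r)+j)\mid r\in R,\ j\in J,\ f(r)+j\in\mathfrak{q}\}$; both are prime ideals of $R\bowtie^f J$. $V(J)$ is the set of prime ideals of $S$ containing $J$. A subset $X\subseteq\operatorname{Spec}(S)$ is compactly packed if whenever an ideal $I$ of $S$ is contained in the union of a family $\{\mathfrak{q}_i\}_i$ of elements of $X$, then $I\subseteq\mathfrak{q}_i$ for some $i$. *)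

theory Defs
  imports "HOL-Algebra.Algebra"
begin

text \<open>Amalgamated duplication primes. The ring R bowtie^f J is viewed as a subset of
  carrier R \<times> carrier S; only set-theoretic inclusions are needed.\<close>

definition prime_prime_f ::
  "('a, 'm) ring_scheme \<Rightarrow> ('b, 'n) ring_scheme \<Rightarrow> ('a \<Rightarrow> 'b) \<Rightarrow> 'b set \<Rightarrow> 'a set \<Rightarrow> ('a \<times> 'b) set"
  where "prime_prime_f R S f J p = {(a, f a \<oplus>\<^bsub>S\<^esub> j) | a j. a \<in> p \<and> j \<in> J}"

definition prime_bar_f ::
  "('a, 'm) ring_scheme \<Rightarrow> ('b, 'n) ring_scheme \<Rightarrow> ('a \<Rightarrow> 'b) \<Rightarrow> 'b set \<Rightarrow> 'b set \<Rightarrow> ('a \<times> 'b) set"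
  where "prime_bar_f R S f J q =
    {(r, f r \<oplus>\<^bsub>S\<^esub> j) | r j. r \<in> carrier R \<and> j \<in> J \<and> f r \<oplus>\<^bsub>S\<^esub> j \<in> q}"

definition spec_minus_V :: "('b, 'n) ring_scheme \<Rightarrow> 'b set \<Rightarrow> 'b set set"
  where "spec_minus_V S J = {q. primeideal q S \<and> \<not> J \<subseteq> q}"

definition compactly_packed :: "('b, 'n) ring_scheme \<Rightarrow> 'b set set \<Rightarrow> bool"
  where "compactly_packed S Xs \<longleftrightarrow>
    (\<forall>I0 Fam. ideal I0 S \<longrightarrow> Fam \<subseteq> Xs \<longrightarrow> I0 \<subseteq> \<Union>Fam \<longrightarrow> (\<exists>q\<in>Fam. I0 \<subseteq> q))"

end

theory Submission
  imports Defs
begin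

text \<open>Both kinds of primes of \<open>R \<bowtie>\<^sup>f J\<close> are described coordinatewise: \<open>p'\<^sup>f\<close>
  consists of the pairs \<open>(a, s)\<close> with \<open>a \<in> p\<close> and \<open>s \<in> f(a) + J\<close>, and \<open>\overline{q}\<^sup>f\<close> of
  the pairs \<open>(r, s)\<close> with \<open>s \<in> f(r) + J\<close> and \<open>s \<in> q\<close>. Hence \<open>p'\<^sup>f \<subseteq> p\<^sub>1'\<^sup>f\<close> amounts to
  \<open>p \<subseteq> p\<^sub>1\<close>, \<open>\overline{q}\<^sup>f \<subseteq> \overline{q\<^sub>1}\<^sup>f\<close> amounts to \<open>q \<inter> (f(R) + J) \<subseteq> q\<^sub>1\<close>, and both
  constructions commute with unions. As \<open>f(R) + J\<close> contains \<open>J\<close>, the remaining ingredient is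
  that a prime \<open>q\<^sub>1\<close> not containing \<open>J\<close> contains \<open>q\<close> once it contains \<open>q \<inter> J\<close>, since \<open>q J \<subseteq> q \<inter> J\<close>;
  compact packing reduces a union of such primes to a single one.\<close>

lemma (in ring) Int_subset_primeideal_imp_subset:
  assumes "primeideal P R" "ideal I R" "ideal J R" "I \<inter> J \<subseteq> P" "\<not> J \<subseteq> P"
  shows "I \<subseteq> P"
  using primeideal_divides_ideal_prod[OF assms(1-3)] ideal_prod_inter[OF assms(2,3)] assms(4,5)
  by blast

lemma compactly_packed_spec_minus_VD:
  assumes "compactly_packed S (spec_minus_V S J)" "ideal I S"
    and "\<And>\<alpha>. \<alpha> \<in> \<Lambda> \<Longrightarrow> primeideal (Q \<alpha>) S" "\<And>\<alpha>. \<alpha> \<in> \<Lambda> \<Longrightarrow> \<not> J \<subseteq> Q \<alpha>"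
    and "I \<subseteq> (\<Union>\<alpha>\<in>\<Lambda>. Q \<alpha>)"
  shows "\<exists>\<alpha>\<in>\<Lambda>. I \<subseteq> Q \<alpha>"
proof -
  have "Q ` \<Lambda> \<subseteq> spec_minus_V S J"
    unfolding spec_minus_V_def using assms(3,4) by blast
  moreover have "I \<subseteq> \<Union> (Q ` \<Lambda>)"
    using assms(5) by simp
  ultimately have "\<exists>q \<in> Q ` \<Lambda>. I \<subseteq> q"
    using assms(1)[unfolded compactly_packed_def, rule_format, OF assms(2)] by blast
  then show ?thesis
    by blast
qed

lemma prime_prime_f_UN:
  "(\<Union>\<alpha>\<in>\<Lambda>. prime_prime_f R S f J (P \<alpha>)) = prime_prime_f R S f J (\<Union>\<alpha>\<in>\<Lambda>. P \<alpha>)"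
  unfolding prime_prime_f_def by blast

lemma prime_bar_f_UN:
  "(\<Union>\<alpha>\<in>\<Lambda>. prime_bar_f R S f J (Q \<alpha>)) = prime_bar_f R S f J (\<Union>\<alpha>\<in>\<Lambda>. Q \<alpha>)"
  unfolding prime_bar_f_def by blast

lemma prime_bar_f_subset_UN_of_subset_UN:
  "A \<subseteq> (\<Union>\<alpha>\<in>\<Lambda>. Q \<alpha>) \<Longrightarrow> prime_bar_f R S f J A \<subseteq> (\<Union>\<alpha>\<in>\<Lambda>. prime_bar_f R S f J (Q \<alpha>))"
  unfolding prime_bar_f_def by blast

lemma snd_mem_prime_bar_f:
  "x \<in> prime_bar_f R S f J B \<Longrightarrow> snd x \<in> B"
  unfolding prime_bar_f_def by auto

lemma prime_bar_f_subset_iff: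
  "prime_bar_f R S f J A \<subseteq> prime_bar_f R S f J B \<longleftrightarrow> A \<inter> (f ` carrier R <+>\<^bsub>S\<^esub> J) \<subseteq> B"
proof
  assume sub: "prime_bar_f R S f J A \<subseteq> prime_bar_f R S f J B"
  show "A \<inter> (f ` carrier R <+>\<^bsub>S\<^esub> J) \<subseteq> B"
  proof
    fix s assume "s \<in> A \<inter> (f ` carrier R <+>\<^bsub>S\<^esub> J)"
    then obtain r j where "r \<in> carrier R" "j \<in> J" "s = f r \<oplus>\<^bsub>S\<^esub> j" "s \<in> A"
      unfolding set_add_def' by auto
    then have "(r, s) \<in> prime_bar_f R S f J A"
      unfolding prime_bar_f_def by auto
    with sub show "s \<in> B"
      using snd_mem_prime_bar_f by fastforce
  qed
next
  assume cover: "A \<inter> (f ` carrier R <+>\<^bsub>S\<^esub> J) \<subseteq> B"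
  show "prime_bar_f R S f J A \<subseteq> prime_bar_f R S f J B"
  proof
    fix x assume "x \<in> prime_bar_f R S f J A"
    then obtain r j where x: "x = (r, f r \<oplus>\<^bsub>S\<^esub> j)" "r \<in> carrier R" "j \<in> J" "f r \<oplus>\<^bsub>S\<^esub> j \<in> A"
      unfolding prime_bar_f_def by auto
    then have "f r \<oplus>\<^bsub>S\<^esub> j \<in> B"
      using cover unfolding set_add_def' by auto
    with x show "x \<in> prime_bar_f R S f J B"
      unfolding prime_bar_f_def by auto
  qed
qed

lemma prime_bar_f_subset_prime_prime_f_iff:
  "prime_bar_f R S f J A \<subseteq> prime_prime_f R S f J B \<longleftrightarrow> fst ` prime_bar_f R S f J A \<subseteq> B"
  unfolding prime_bar_f_def prime_prime_f_def by force

locale amalgamation = ring_hom_ring R S f + J: ideal J S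
  for R :: "('a, 'm) ring_scheme" and S :: "('b, 'n) ring_scheme" and f and J

context amalgamation
begin

lemma diag_mem_prime_prime_f:
  assumes "A \<subseteq> carrier R" "a \<in> A"
  shows "(a, f a) \<in> prime_prime_f R S f J A"
proof -
  have "f a = f a \<oplus>\<^bsub>S\<^esub> \<zero>\<^bsub>S\<^esub>"
    using assms by auto
  then show ?thesis
    unfolding prime_prime_f_def using assms(2) J.zero_closed by blast
qed

lemma prime_prime_f_subset_iff:
  assumes "A \<subseteq> carrier R"
  shows "prime_prime_f R S f J A \<subseteq> prime_prime_f R S f J B \<longleftrightarrow> A \<subseteq> B"
proof
  assume "prime_prime_f R S f J A \<subseteq> prime_prime_f R S f J B"
  then show "A \<subseteq> B"
    using diag_mem_prime_prime_f[OF assms] unfolding prime_prime_f_def by blast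
qed (auto simp: prime_prime_f_def)

lemma prime_prime_f_subset_UN_iff:
  assumes "A \<subseteq> carrier R"
  shows "prime_prime_f R S f J A \<subseteq> (\<Union>\<alpha>\<in>\<Lambda>. prime_prime_f R S f J (P \<alpha>))
    \<longleftrightarrow> A \<subseteq> (\<Union>\<alpha>\<in>\<Lambda>. P \<alpha>)"
  unfolding prime_prime_f_UN using prime_prime_f_subset_iff[OF assms] .

lemma UN_prime_prime_f_subset_iff:
  assumes "\<And>\<alpha>. \<alpha> \<in> \<Lambda> \<Longrightarrow> P \<alpha> \<subseteq> carrier R"
  shows "(\<Union>\<alpha>\<in>\<Lambda>. prime_prime_f R S f J (P \<alpha>)) \<subseteq> prime_prime_f R S f J A
    \<longleftrightarrow> (\<Union>\<alpha>\<in>\<Lambda>. P \<alpha>) \<subseteq> A"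
  unfolding prime_prime_f_UN using assms by (intro prime_prime_f_subset_iff) blast

lemma J_subset_of_prime_prime_f_subset_prime_bar_f:
  assumes "\<zero>\<^bsub>R\<^esub> \<in> A" "prime_prime_f R S f J A \<subseteq> prime_bar_f R S f J B"
  shows "J \<subseteq> B"
proof
  fix j assume "j \<in> J"
  then have "(\<zero>\<^bsub>R\<^esub>, f \<zero>\<^bsub>R\<^esub> \<oplus>\<^bsub>S\<^esub> j) \<in> prime_bar_f R S f J B"
    using assms unfolding prime_prime_f_def by blast
  moreover have "f \<zero>\<^bsub>R\<^esub> \<oplus>\<^bsub>S\<^esub> j = j"
    using \<open>j \<in> J\<close> J.Icarr by simp
  ultimately show "j \<in> B"
    using snd_mem_prime_bar_f by fastforce
qed

lemma J_subset_image_set_add: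
  "J \<subseteq> f ` carrier R <+>\<^bsub>S\<^esub> J"
proof
  fix j assume "j \<in> J"
  then have "j = f \<zero>\<^bsub>R\<^esub> \<oplus>\<^bsub>S\<^esub> j"
    using J.Icarr by simp
  then show "j \<in> f ` carrier R <+>\<^bsub>S\<^esub> J"
    unfolding set_add_def' using \<open>j \<in> J\<close> by blast
qed

lemma image_subset_image_set_add:
  "f ` carrier R \<subseteq> f ` carrier R <+>\<^bsub>S\<^esub> J"
proof
  fix s assume "s \<in> f ` carrier R"
  then have "s = s \<oplus>\<^bsub>S\<^esub> \<zero>\<^bsub>S\<^esub>"
    by auto
  then show "s \<in> f ` carrier R <+>\<^bsub>S\<^esub> J"
    unfolding set_add_def' using \<open>s \<in> f ` carrier R\<close> J.zero_closed by blast
qed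

lemma fst_prime_bar_f:
  assumes "A \<subseteq> carrier S"
  shows "fst ` prime_bar_f R S f J A = {r \<in> carrier R. f r \<in> A <+>\<^bsub>S\<^esub> J}"
proof (intro equalityI subsetI)
  fix r assume "r \<in> fst ` prime_bar_f R S f J A"
  then obtain j where r: "r \<in> carrier R" "j \<in> J" "f r \<oplus>\<^bsub>S\<^esub> j \<in> A"
    unfolding prime_bar_f_def by auto
  then have "f r = (f r \<oplus>\<^bsub>S\<^esub> j) \<oplus>\<^bsub>S\<^esub> \<ominus>\<^bsub>S\<^esub> j"
    using J.Icarr by (simp add: S.a_assoc S.r_neg)
  then show "r \<in> {r \<in> carrier R. f r \<in> A <+>\<^bsub>S\<^esub> J}"
    unfolding set_add_def' using r J.a_inv_closed by blast
next
  fix r assume "r \<in> {r \<in> carrier R. f r \<in> A <+>\<^bsub>S\<^esub> J}"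
  then obtain a j where r: "r \<in> carrier R" "a \<in> A" "j \<in> J" "f r = a \<oplus>\<^bsub>S\<^esub> j"
    unfolding set_add_def' by blast
  then have "a = f r \<oplus>\<^bsub>S\<^esub> \<ominus>\<^bsub>S\<^esub> j"
    using assms J.Icarr by (auto simp: S.a_assoc S.r_neg)
  then have "(r, a) \<in> prime_bar_f R S f J A"
    unfolding prime_bar_f_def using r J.a_inv_closed by blast
  then show "r \<in> fst ` prime_bar_f R S f J A"
    by force
qed

lemma prime_bar_f_ideal_subset_iff:
  assumes "ideal I S" "primeideal q S" "\<not> J \<subseteq> q"
  shows "prime_bar_f R S f J I \<subseteq> prime_bar_f R S f J q \<longleftrightarrow> I \<subseteq> q"
proof
  assume "prime_bar_f R S f J I \<subseteq> prime_bar_f R S f J q"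
  then have "I \<inter> J \<subseteq> q"
    using J_subset_image_set_add unfolding prime_bar_f_subset_iff by blast
  then show "I \<subseteq> q"
    by (rule S.Int_subset_primeideal_imp_subset[OF assms(2,1) J.is_ideal _ assms(3)])
qed (auto simp: prime_bar_f_subset_iff)

lemma UN_prime_bar_f_subset_iff:
  assumes "\<And>\<alpha>. \<alpha> \<in> \<Lambda> \<Longrightarrow> ideal (Q \<alpha>) S" "primeideal q S" "\<not> J \<subseteq> q"
  shows "(\<Union>\<alpha>\<in>\<Lambda>. prime_bar_f R S f J (Q \<alpha>)) \<subseteq> prime_bar_f R S f J q
    \<longleftrightarrow> (\<Union>\<alpha>\<in>\<Lambda>. Q \<alpha>) \<subseteq> q"
  unfolding UN_subset_iff using prime_bar_f_ideal_subset_iff[OF assms(1) assms(2,3)] by blast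

lemma prime_bar_f_subset_UN_prime_prime_f_iff:
  assumes "A \<subseteq> carrier S"
  shows "prime_bar_f R S f J A \<subseteq> (\<Union>\<alpha>\<in>\<Lambda>. prime_prime_f R S f J (P \<alpha>))
    \<longleftrightarrow> {r \<in> carrier R. f r \<in> A <+>\<^bsub>S\<^esub> J} \<subseteq> (\<Union>\<alpha>\<in>\<Lambda>. P \<alpha>)"
  unfolding prime_prime_f_UN prime_bar_f_subset_prime_prime_f_iff fst_prime_bar_f[OF assms] ..

lemma prime_prime_f_not_subset_UN_prime_bar_f:
  assumes "\<zero>\<^bsub>R\<^esub> \<in> A" "compactly_packed S (spec_minus_V S J)"
    and "\<And>\<alpha>. \<alpha> \<in> \<Lambda> \<Longrightarrow> primeideal (Q \<alpha>) S" "\<And>\<alpha>. \<alpha> \<in> \<Lambda> \<Longrightarrow> \<not> J \<subseteq> Q \<alpha>"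
  shows "\<not> prime_prime_f R S f J A \<subseteq> (\<Union>\<alpha>\<in>\<Lambda>. prime_bar_f R S f J (Q \<alpha>))"
proof
  assume "prime_prime_f R S f J A \<subseteq> (\<Union>\<alpha>\<in>\<Lambda>. prime_bar_f R S f J (Q \<alpha>))"
  then have "J \<subseteq> (\<Union>\<alpha>\<in>\<Lambda>. Q \<alpha>)"
    unfolding prime_bar_f_UN by (rule J_subset_of_prime_prime_f_subset_prime_bar_f[OF assms(1)])
  then obtain \<alpha> where "\<alpha> \<in> \<Lambda>" "J \<subseteq> Q \<alpha>"
    using compactly_packed_spec_minus_VD[of S J J \<Lambda> Q, OF assms(2) J.is_ideal assms(3,4)] by blast
  with assms(4) show False
    by blast
qed

lemma subset_UN_of_prime_bar_f_subset_UN: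
  assumes q: "primeideal q S"
    and Q: "\<And>\<alpha>. \<alpha> \<in> \<Lambda> \<Longrightarrow> primeideal (Q \<alpha>) S" "\<And>\<alpha>. \<alpha> \<in> \<Lambda> \<Longrightarrow> \<not> J \<subseteq> Q \<alpha>"
    and surj_or_packed: "f ` carrier R = carrier S \<or> compactly_packed S (spec_minus_V S J)"
    and "prime_bar_f R S f J q \<subseteq> (\<Union>\<alpha>\<in>\<Lambda>. prime_bar_f R S f J (Q \<alpha>))"
  shows "q \<subseteq> (\<Union>\<alpha>\<in>\<Lambda>. Q \<alpha>)"
proof -
  interpret q: ideal q S
    using q by (rule primeideal.axioms(1))
  have covered: "q \<inter> (f ` carrier R <+>\<^bsub>S\<^esub> J) \<subseteq> (\<Union>\<alpha>\<in>\<Lambda>. Q \<alpha>)"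
    using assms(5) unfolding prime_bar_f_UN prime_bar_f_subset_iff .
  from surj_or_packed show ?thesis
  proof
    assume "f ` carrier R = carrier S"
    then show ?thesis
      using covered image_subset_image_set_add q.a_subset by blast
  next
    assume packed: "compactly_packed S (spec_minus_V S J)"
    have "ideal (q \<inter> J) S"
      using S.i_intersect q.is_ideal J.is_ideal .
    moreover have "q \<inter> J \<subseteq> (\<Union>\<alpha>\<in>\<Lambda>. Q \<alpha>)"
      using covered J_subset_image_set_add by blast
    ultimately obtain \<alpha> where \<alpha>: "\<alpha> \<in> \<Lambda>" "q \<inter> J \<subseteq> Q \<alpha>"
      using compactly_packed_spec_minus_VD[of S J "q \<inter> J" \<Lambda> Q, OF packed _ Q] by blast
    have "q \<subseteq> Q \<alpha>"
      using S.Int_subset_primeideal_imp_subset[OF Q(1)[OF \<alpha>(1)] q.is_ideal J.is_ideal \<alpha>(2)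
          Q(2)[OF \<alpha>(1)]] .
    with \<open>\<alpha> \<in> \<Lambda>\<close> show ?thesis
      by blast
  qed
qed

end

theorem lemma2p2:
  fixes R :: "('a, 'm) ring_scheme" and S :: "('b, 'n) ring_scheme"
    and f :: "'a \<Rightarrow> 'b" and J :: "'b set"
    and \<Lambda> :: "'i set" and p :: "'a set" and P :: "'i \<Rightarrow> 'a set"
    and q :: "'b set" and Q :: "'i \<Rightarrow> 'b set"
  assumes "cring R" and "cring S" and "f \<in> ring_hom R S"
    and "ideal J S" and "J \<noteq> {\<zero>\<^bsub>S\<^esub>}" and "J \<noteq> carrier S"
    and "primeideal p R" and "\<And>\<alpha>. \<alpha> \<in> \<Lambda> \<Longrightarrow> primeideal (P \<alpha>) R"
    and "primeideal q S" and "\<not> J \<subseteq> q"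
    and "\<And>\<alpha>. \<alpha> \<in> \<Lambda> \<Longrightarrow> primeideal (Q \<alpha>) S"
    and "\<And>\<alpha>. \<alpha> \<in> \<Lambda> \<Longrightarrow> \<not> J \<subseteq> Q \<alpha>"
  shows
    "(prime_prime_f R S f J p \<subseteq> (\<Union>\<alpha>\<in>\<Lambda>. prime_prime_f R S f J (P \<alpha>))
        \<longleftrightarrow> p \<subseteq> (\<Union>\<alpha>\<in>\<Lambda>. P \<alpha>))
     \<and> (q \<subseteq> (\<Union>\<alpha>\<in>\<Lambda>. Q \<alpha>) \<longrightarrow>
          prime_bar_f R S f J q \<subseteq> (\<Union>\<alpha>\<in>\<Lambda>. prime_bar_f R S f J (Q \<alpha>)))
     \<and> ((f ` carrier R = carrier S \<or> compactly_packed S (spec_minus_V S J)) \<longrightarrow>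
          prime_bar_f R S f J q \<subseteq> (\<Union>\<alpha>\<in>\<Lambda>. prime_bar_f R S f J (Q \<alpha>)) \<longrightarrow>
          q \<subseteq> (\<Union>\<alpha>\<in>\<Lambda>. Q \<alpha>))
     \<and> ((\<Union>\<alpha>\<in>\<Lambda>. prime_prime_f R S f J (P \<alpha>)) \<subseteq> prime_prime_f R S f J p
        \<longleftrightarrow> (\<Union>\<alpha>\<in>\<Lambda>. P \<alpha>) \<subseteq> p)
     \<and> ((\<Union>\<alpha>\<in>\<Lambda>. prime_bar_f R S f J (Q \<alpha>)) \<subseteq> prime_bar_f R S f J q
        \<longleftrightarrow> (\<Union>\<alpha>\<in>\<Lambda>. Q \<alpha>) \<subseteq> q)
     \<and> (prime_bar_f R S f J q \<subseteq> (\<Union>\<alpha>\<in>\<Lambda>. prime_prime_f R S f J (P \<alpha>))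
        \<longleftrightarrow> {r \<in> carrier R. f r \<in> q <+>\<^bsub>S\<^esub> J} \<subseteq> (\<Union>\<alpha>\<in>\<Lambda>. P \<alpha>))
     \<and> (compactly_packed S (spec_minus_V S J) \<longrightarrow>
          \<not> prime_prime_f R S f J p \<subseteq> (\<Union>\<alpha>\<in>\<Lambda>. prime_bar_f R S f J (Q \<alpha>)))"
proof -
  interpret amalgamation R S f J
    using ring_hom_ringI2[OF cring.axioms(1)[OF assms(1)] cring.axioms(1)[OF assms(2)] assms(3)]
      assms(4) by (rule amalgamation.intro)
  interpret p: ideal p R
    using assms(7) by (rule primeideal.axioms(1))
  interpret q: ideal q S
    using assms(9) by (rule primeideal.axioms(1))
  have P: "\<And>\<alpha>. \<alpha> \<in> \<Lambda> \<Longrightarrow> P \<alpha> \<subseteq> carrier R"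
    using ideal.Icarr[OF primeideal.axioms(1)[OF assms(8)]] by blast
  have Q: "\<And>\<alpha>. \<alpha> \<in> \<Lambda> \<Longrightarrow> ideal (Q \<alpha>) S"
    using primeideal.axioms(1)[OF assms(11)] .
  note parts = prime_prime_f_subset_UN_iff[OF p.a_subset]
    prime_bar_f_subset_UN_of_subset_UN
    subset_UN_of_prime_bar_f_subset_UN[where \<Lambda> = \<Lambda> and Q = Q, OF assms(9,11,12)]
    UN_prime_prime_f_subset_iff[where \<Lambda> = \<Lambda> and P = P and A = p, OF P]
    UN_prime_bar_f_subset_iff[where \<Lambda> = \<Lambda> and Q = Q, OF Q assms(9,10)]
    prime_bar_f_subset_UN_prime_prime_f_iff[OF q.a_subset]
    prime_prime_f_not_subset_UN_prime_bar_f[where \<Lambda> = \<Lambda> and Q = Q,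
      OF p.zero_closed _ assms(11,12)]
  show ?thesis
    by (intro conjI impI; rule parts)
qed

end
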